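(* Let $\gamma:[0,l]\times[0,w)\to E_1^4$, $(s,t)\mapsto\gamma(s,t)$, be a smooth inextensible one-parameter family of partially null curves in $E_1^4$ parametrized by arclength, i.e. $\left\|\frac{\partial\gamma}{\partial s}\right\|\equiv1$, with Frenet frame $\{T,N,B_1,B_2\}$, curvatures $k_1,k_2$ (and $k_3\equiv0$), and write $$\frac{\partial\gamma}{\partial t}=\beta_1T+\beta_2N+\beta_3B_1+\beta_4B_2$$ with smooth scalar functions $\beta_i$. Put $\psi_1=\langle\frac{\partial N}{\partial t},B_1\rangle$, $\psi_2=\langle\frac{\partial N}{\partial t},B_2\rangle$, $\psi_3=\langle\frac{\partial B_1}{\partial t},B_2\rangle$. Then $$\frac{\partial T}{\partial t}=\Big(\frac{\partial\beta_2}{\partial s}+\beta_1k_1-\beta_4k_2\Big)N+\Big(\frac{\partial\beta_3}{\partial s}+\beta_2k_2\Big)B_1+\frac{\partial\beta_4}{\partial s}B_2,$$ $$\frac{\partial N}{\partial t}=-\Big(\frac{\partial\beta_2}{\partial s}+\beta_1k_1-\beta_4k_2\Big)T+\psi_2B_1+\psi_1B_2,$$ $$\frac{\partial B_1}{\partial t}=-\frac{\partial\beta_4}{\partial s}T-\psi_1N+\psi_3B_1,$$ $$\frac{\partial B_2}{\partial t}=-\Big(\frac{\partial\beta_3}{\partial s}+k_2\beta_2\Big)T-\psi_2N-\psi_3B_2.$$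
   Context: $E_1^4$ is $\mathbb{R}^4$ with the Lorentzian metric $\langle x,y\rangle=-x_1y_1+x_2y_2+x_3y_3+x_4y_4$ and $\|x\|=\sqrt{|\langle x,x\rangle|}$. A partially null curve is a spacelike curve whose first binormal is a null vector. For such a curve parametrized by arclength $s$, its Frenet frame $\{T,N,B_1,B_2\}$ ($T=\partial\gamma/\partial s$) satisfies $\langle T,T\rangle=\langle N,N\rangle=1$, $\langle B_1,B_1\rangle=\langle B_2,B_2\rangle=0$, $\langle B_1,B_2\rangle=1$, all other inner products zero, and the Frenet equations $T'=k_1N$, $N'=-k_1T+k_2B_1$, $B_1'=k_3B_1$, $B_2'=-k_2N-k_3B_2$, with $k_3\equiv0$. In the family, each $s\mapsto\gamma(s,t)$ is such a curve and frame and curvatures are smooth in $(s,t)$. The flow is inextensible if $\frac{\partial}{\partial t}\|\partial\gamma/\partial u\|=0$; with the arclength parametrization $\|\partial\gamma/\partial s\|\equiv1$ for all $t$. *)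

theory Defs
  imports "HOL-Analysis.Analysis"
begin

definition lor :: "real^4 \<Rightarrow> real^4 \<Rightarrow> real" where
  "lor x y = - (x$1 * y$1) + x$2 * y$2 + x$3 * y$3 + x$4 * y$4"

definition lnorm :: "real^4 \<Rightarrow> real" where
  "lnorm x = sqrt \<bar>lor x x\<bar>"

fun Ck_on :: "nat \<Rightarrow> 'a::real_normed_vector set \<Rightarrow> ('a \<Rightarrow> 'b::real_normed_vector) \<Rightarrow> bool" where
  "Ck_on 0 U f = continuous_on U f"
| "Ck_on (Suc n) U f =
     (\<exists>f'. (\<forall>x\<in>U. (f has_derivative f' x) (at x)) \<and> (\<forall>v. Ck_on n U (\<lambda>x. f' x v)))"

definition smooth_on :: "'a::real_normed_vector set \<Rightarrow> ('a \<Rightarrow> 'b::real_normed_vector) \<Rightarrow> bool" where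
  "smooth_on U f \<longleftrightarrow> (\<forall>n. Ck_on n U f)"

definition d_s :: "(real \<Rightarrow> real \<Rightarrow> 'b::real_normed_vector) \<Rightarrow> real \<Rightarrow> real \<Rightarrow> 'b" where
  "d_s f s t = vector_derivative (\<lambda>x. f x t) (at s)"

definition d_t :: "(real \<Rightarrow> real \<Rightarrow> 'b::real_normed_vector) \<Rightarrow> real \<Rightarrow> real \<Rightarrow> 'b" where
  "d_t f s t = vector_derivative (\<lambda>y. f s y) (at t)"

end

theory Submission
  imports Defs
begin

text \<open>
  Differentiating the constant Gram matrix of the frame along the flow shows that the
  \<open>t\<close>-derivative of the frame is Lorentz-skew; since the frame is a basis, each
  derivative is determined by its Lorentz products with the frame, so all entries are
  fixed by the skew relations once \<open>\<partial>T/\<partial>t\<close> is known.  The latter is obtained by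
  commuting the mixed partial derivatives of \<open>\<gamma>\<close> (Schwarz's theorem) and differentiating
  \<open>\<partial>\<gamma>/\<partial>t = \<Sum> \<beta>\<^sub>i X\<^sub>i\<close> in \<open>s\<close> with the Frenet equations; its \<open>T\<close>-component vanishes
  because \<open>\<langle>T,T\<rangle> = 1\<close>.
\<close>

section \<open>The Lorentzian inner product\<close>

lemma lor_commute: "lor x y = lor y x"
  by (simp add: lor_def algebra_simps)

lemma lor_linear [simp]:
  "lor (x + y) z = lor x z + lor y z" "lor z (x + y) = lor z x + lor z y"
  "lor (x - y) z = lor x z - lor y z" "lor z (x - y) = lor z x - lor z y"
  "lor (- x) z = - lor x z" "lor z (- x) = - lor z x"
  "lor (a *\<^sub>R x) z = a * lor x z" "lor z (a *\<^sub>R x) = a * lor z x"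
  "lor 0 z = 0" "lor z 0 = 0"
  by (simp_all add: lor_def algebra_simps)

lemma lor_sum_right: "finite S \<Longrightarrow> lor z (\<Sum>v\<in>S. f v) = (\<Sum>v\<in>S. lor z (f v))"
  by (induction S rule: finite_induct) auto

lemma lor_nondegenerate:
  assumes "\<And>e. lor y e = 0"
  shows "y = 0"
proof -
  have "lor y (axis 1 1) = - y$1" "lor y (axis 2 1) = y$2" "lor y (axis 3 1) = y$3"
    "lor y (axis 4 1) = y$4"
    by (simp_all add: lor_def axis_def)
  then show ?thesis
    using assms by (simp add: vec_eq_iff forall_4)
qed

section \<open>Null frames\<close>

definition null_frame :: "real^4 \<Rightarrow> real^4 \<Rightarrow> real^4 \<Rightarrow> real^4 \<Rightarrow> bool" where
  "null_frame T N B1 B2 \<longleftrightarrow>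
     lor T T = 1 \<and> lor N N = 1 \<and> lor B1 B1 = 0 \<and> lor B2 B2 = 0 \<and> lor B1 B2 = 1 \<and>
     lor T N = 0 \<and> lor T B1 = 0 \<and> lor T B2 = 0 \<and> lor N B1 = 0 \<and> lor N B2 = 0"

text \<open>First-order condition for \<open>(T', N', B1', B2')\<close> to be the velocity of a curve of null
  frames through \<open>(T, N, B1, B2)\<close>: every Lorentz product of two frame vectors is stationary.\<close>

definition null_frame_variation ::
    "real^4 \<Rightarrow> real^4 \<Rightarrow> real^4 \<Rightarrow> real^4 \<Rightarrow> real^4 \<Rightarrow> real^4 \<Rightarrow> real^4 \<Rightarrow> real^4 \<Rightarrow> bool" where
  "null_frame_variation T N B1 B2 T' N' B1' B2' \<longleftrightarrow>
     lor T' T + lor T T' = 0 \<and> lor N' N + lor N N' = 0 \<and>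
     lor B1' B1 + lor B1 B1' = 0 \<and> lor B2' B2 + lor B2 B2' = 0 \<and>
     lor B1' B2 + lor B1 B2' = 0 \<and> lor T' N + lor T N' = 0 \<and>
     lor T' B1 + lor T B1' = 0 \<and> lor T' B2 + lor T B2' = 0 \<and>
     lor N' B1 + lor N B1' = 0 \<and> lor N' B2 + lor N B2' = 0"

lemma null_frame_lor:
  assumes "null_frame T N B1 B2"
  shows "lor T T = 1" "lor N N = 1" "lor B1 B1 = 0" "lor B2 B2 = 0" "lor B1 B2 = 1"
    "lor T N = 0" "lor T B1 = 0" "lor T B2 = 0" "lor N B1 = 0" "lor N B2 = 0"
    "lor N T = 0" "lor B1 T = 0" "lor B2 T = 0" "lor B1 N = 0" "lor B2 N = 0" "lor B2 B1 = 1"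
  using assms unfolding null_frame_def by (simp_all add: lor_commute)

lemma null_frame_independent:
  assumes "null_frame T N B1 B2"
  shows "independent {T, N, B1, B2}" and "card {T, N, B1, B2} = 4"
proof -
  note fr = null_frame_lor[OF assms]
  then have distinct: "T \<noteq> N" "T \<noteq> B1" "T \<noteq> B2" "N \<noteq> B1" "N \<noteq> B2" "B1 \<noteq> B2"
    by auto
  then show "card {T, N, B1, B2} = 4"
    by auto
  show "independent {T, N, B1, B2}"
  proof
    assume "dependent {T, N, B1, B2}"
    then obtain u where u: "\<exists>v\<in>{T, N, B1, B2}. u v \<noteq> 0"
      and "(\<Sum>v\<in>{T, N, B1, B2}. u v *\<^sub>R v) = 0"
      using dependent_finite[of "{T, N, B1, B2}"] by auto
    then have comb: "u T *\<^sub>R T + u N *\<^sub>R N + u B1 *\<^sub>R B1 + u B2 *\<^sub>R B2 = 0"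
      using distinct by (simp add: algebra_simps)
    have "lor (u T *\<^sub>R T + u N *\<^sub>R N + u B1 *\<^sub>R B1 + u B2 *\<^sub>R B2) T = u T"
      "lor (u T *\<^sub>R T + u N *\<^sub>R N + u B1 *\<^sub>R B1 + u B2 *\<^sub>R B2) N = u N"
      "lor (u T *\<^sub>R T + u N *\<^sub>R N + u B1 *\<^sub>R B1 + u B2 *\<^sub>R B2) B1 = u B2"
      "lor (u T *\<^sub>R T + u N *\<^sub>R N + u B1 *\<^sub>R B1 + u B2 *\<^sub>R B2) B2 = u B1"
      using fr by simp_all
    then show False
      using u unfolding comb by auto
  qed
qed

text \<open>The Lorentz dual of \<open>B1\<close> is \<open>B2\<close> and vice versa, hence the swapped coefficients.\<close>

lemma null_frame_expansion:
  assumes "null_frame T N B1 B2"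
  shows "Z = lor Z T *\<^sub>R T + lor Z N *\<^sub>R N + lor Z B2 *\<^sub>R B1 + lor Z B1 *\<^sub>R B2"
proof -
  let ?F = "{T, N, B1, B2}"
  have "UNIV \<subseteq> span ?F"
    using null_frame_independent[OF assms] by (intro card_ge_dim_independent) auto
  then have spans: "e \<in> span ?F" for e
    by blast
  define Y where "Y = Z - (lor Z T *\<^sub>R T + lor Z N *\<^sub>R N + lor Z B2 *\<^sub>R B1 + lor Z B1 *\<^sub>R B2)"
  have Y_frame: "lor Y v = 0" if "v \<in> ?F" for v
    using that null_frame_lor[OF assms] unfolding Y_def by auto
  have "lor Y e = 0" for e
  proof -
    obtain u where "e = (\<Sum>v\<in>?F. u v *\<^sub>R v)"
      using spans[of e] span_finite[of ?F] by auto
    then show ?thesis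
      using Y_frame by (simp add: lor_sum_right)
  qed
  then have "Y = 0"
    by (rule lor_nondegenerate)
  then show ?thesis
    unfolding Y_def by simp
qed

lemma null_frame_variation_expansion:
  assumes frame: "null_frame T N B1 B2"
    and variation: "null_frame_variation T N B1 B2 T' N' B1' B2'"
    and T': "T' = \<alpha> *\<^sub>R T + a *\<^sub>R N + b *\<^sub>R B1 + c *\<^sub>R B2"
  shows "\<alpha> = 0"
    and "N' = - a *\<^sub>R T + lor N' B2 *\<^sub>R B1 + lor N' B1 *\<^sub>R B2"
    and "B1' = - c *\<^sub>R T - lor N' B1 *\<^sub>R N + lor B1' B2 *\<^sub>R B1"
    and "B2' = - b *\<^sub>R T - lor N' B2 *\<^sub>R N - lor B1' B2 *\<^sub>R B2"
proof -
  have T'_frame: "lor T' T = \<alpha>" "lor T' N = a" "lor T' B1 = c" "lor T' B2 = b"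
    unfolding T' using null_frame_lor[OF frame] by simp_all
  have skew: "lor T' T = 0" "lor N' T = - a" "lor N' N = 0"
    "lor B1' T = - c" "lor B1' N = - lor N' B1" "lor B1' B1 = 0"
    "lor B2' T = - b" "lor B2' N = - lor N' B2" "lor B2' B1 = - lor B1' B2" "lor B2' B2 = 0"
    using variation T'_frame unfolding null_frame_variation_def by (simp_all add: lor_commute)
  show "\<alpha> = 0"
    using skew T'_frame by simp
  show "N' = - a *\<^sub>R T + lor N' B2 *\<^sub>R B1 + lor N' B1 *\<^sub>R B2"
    using null_frame_expansion[OF frame, of N'] skew by simp
  show "B1' = - c *\<^sub>R T - lor N' B1 *\<^sub>R N + lor B1' B2 *\<^sub>R B1"
    using null_frame_expansion[OF frame, of B1'] skew by (simp add: algebra_simps)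
  show "B2' = - b *\<^sub>R T - lor N' B2 *\<^sub>R N - lor B1' B2 *\<^sub>R B2"
    using null_frame_expansion[OF frame, of B2'] skew by (simp add: algebra_simps)
qed

section \<open>Partial derivatives and Schwarz's theorem\<close>

lemma has_derivative_partials:
  fixes G :: "real \<times> real \<Rightarrow> 'b::real_normed_vector"
  assumes "(G has_derivative G') (at (x, y))"
  shows "((\<lambda>x. G (x, y)) has_vector_derivative G' (1, 0)) (at x)"
    and "((\<lambda>y. G (x, y)) has_vector_derivative G' (0, 1)) (at y)"
proof -
  have lin: "linear G'"
    using assms has_derivative_linear by blast
  have "((\<lambda>x. (x, y)) has_derivative (\<lambda>h. (h, 0))) (at x)"
    by (intro has_derivative_Pair has_derivative_ident has_derivative_const)
  from has_derivative_compose[OF this, of G G'] assms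
  have "((\<lambda>x. G (x, y)) has_derivative (\<lambda>h. G' (h, 0))) (at x)"
    by simp
  moreover have "(\<lambda>h. G' (h, 0)) = (\<lambda>h. h *\<^sub>R G' (1, 0))"
  proof
    fix h :: real
    have "G' (h, 0) = G' (h *\<^sub>R (1, 0))"
      by simp
    also have "\<dots> = h *\<^sub>R G' (1, 0)"
      by (rule linear_cmul[OF lin])
    finally show "G' (h, 0) = h *\<^sub>R G' (1, 0)" .
  qed
  ultimately show "((\<lambda>x. G (x, y)) has_vector_derivative G' (1, 0)) (at x)"
    by (simp add: has_vector_derivative_def)
  have "((\<lambda>y. (x, y)) has_derivative (\<lambda>h. (0, h))) (at y)"
    by (intro has_derivative_Pair has_derivative_ident has_derivative_const)
  from has_derivative_compose[OF this, of G G'] assms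
  have "((\<lambda>y. G (x, y)) has_derivative (\<lambda>h. G' (0, h))) (at y)"
    by simp
  moreover have "(\<lambda>h. G' (0, h)) = (\<lambda>h. h *\<^sub>R G' (0, 1))"
  proof
    fix h :: real
    have "G' (0, h) = G' (h *\<^sub>R (0, 1))"
      by simp
    also have "\<dots> = h *\<^sub>R G' (0, 1)"
      by (rule linear_cmul[OF lin])
    finally show "G' (0, h) = h *\<^sub>R G' (0, 1)" .
  qed
  ultimately show "((\<lambda>y. G (x, y)) has_vector_derivative G' (0, 1)) (at y)"
    by (simp add: has_vector_derivative_def)
qed

lemma Ck_on_Suc_partials:
  fixes f :: "real \<Rightarrow> real \<Rightarrow> 'b::real_normed_vector"
  assumes "Ck_on (Suc n) U (\<lambda>p. f (fst p) (snd p))" and "(s, t) \<in> U"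
  shows "((\<lambda>x. f x t) has_vector_derivative d_s f s t) (at s)"
    and "((\<lambda>y. f s y) has_vector_derivative d_t f s t) (at t)"
proof -
  from assms(1) obtain f' where "\<forall>p\<in>U. ((\<lambda>p. f (fst p) (snd p)) has_derivative f' p) (at p)"
    by auto
  with assms(2) have "((\<lambda>p. f (fst p) (snd p)) has_derivative f' (s, t)) (at (s, t))"
    by blast
  from has_derivative_partials[OF this] show
    "((\<lambda>x. f x t) has_vector_derivative d_s f s t) (at s)"
    "((\<lambda>y. f s y) has_vector_derivative d_t f s t) (at t)"
    unfolding d_s_def d_t_def by (simp_all add: vector_derivative_at)
qed

lemma smooth_on_partials:
  fixes f :: "real \<Rightarrow> real \<Rightarrow> 'b::real_normed_vector"
  assumes "smooth_on U (\<lambda>p. f (fst p) (snd p))" and "(s, t) \<in> U"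
  shows "((\<lambda>x. f x t) has_vector_derivative d_s f s t) (at s)"
    and "((\<lambda>y. f s y) has_vector_derivative d_t f s t) (at t)"
  using assms Ck_on_Suc_partials[of 0 U f s t] unfolding smooth_on_def by blast+

lemma Ck_on_2_second_partials:
  fixes f :: "real \<Rightarrow> real \<Rightarrow> 'b::real_normed_vector"
  assumes C2: "Ck_on 2 U (\<lambda>p. f (fst p) (snd p))" and "open U"
  obtains F_st F_ts where
    "\<And>x y. (x, y) \<in> U \<Longrightarrow> ((\<lambda>y. d_s f x y) has_vector_derivative F_st (x, y)) (at y)"
    "\<And>x y. (x, y) \<in> U \<Longrightarrow> ((\<lambda>x. d_t f x y) has_vector_derivative F_ts (x, y)) (at x)"
    "continuous_on U F_st" "continuous_on U F_ts"
proof -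
  from C2 obtain f' where f': "\<forall>p\<in>U. ((\<lambda>p. f (fst p) (snd p)) has_derivative f' p) (at p)"
    and f'_C1: "\<forall>v. Ck_on 1 U (\<lambda>p. f' p v)"
    by (auto simp: numeral_2_eq_2)
  have partials: "d_s f x y = f' (x, y) (1, 0)" "d_t f x y = f' (x, y) (0, 1)" if "(x, y) \<in> U" for x y
    using has_derivative_partials[OF bspec[OF f' that]]
    unfolding d_s_def d_t_def by (simp_all add: vector_derivative_at)
  obtain g1 where g1: "\<forall>p\<in>U. ((\<lambda>p. f' p (1, 0)) has_derivative g1 p) (at p)"
    "\<forall>v. continuous_on U (\<lambda>p. g1 p v)"
    using f'_C1[THEN spec, of "(1, 0)"] by auto
  obtain g2 where g2: "\<forall>p\<in>U. ((\<lambda>p. f' p (0, 1)) has_derivative g2 p) (at p)"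
    "\<forall>v. continuous_on U (\<lambda>p. g2 p v)"
    using f'_C1[THEN spec, of "(0, 1)"] by auto
  show ?thesis
  proof (rule that[of "\<lambda>p. g1 p (0, 1)" "\<lambda>p. g2 p (1, 0)"])
    fix x y assume xy: "(x, y) \<in> U"
    have "((\<lambda>y. f' (x, y) (1, 0)) has_vector_derivative g1 (x, y) (0, 1)) (at y)"
      using has_derivative_partials(2)[OF g1(1)[rule_format, OF xy]] by simp
    then show "((\<lambda>y. d_s f x y) has_vector_derivative g1 (x, y) (0, 1)) (at y)"
    proof (rule has_vector_derivative_transform_within_open)
      show "open ((\<lambda>y. (x, y)) -` U)"
        using \<open>open U\<close> by (intro continuous_open_vimage continuous_intros)
    qed (use xy partials(1) in auto)
    have "((\<lambda>x. f' (x, y) (0, 1)) has_vector_derivative g2 (x, y) (1, 0)) (at x)"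
      using has_derivative_partials(1)[OF g2(1)[rule_format, OF xy]] by simp
    then show "((\<lambda>x. d_t f x y) has_vector_derivative g2 (x, y) (1, 0)) (at x)"
    proof (rule has_vector_derivative_transform_within_open)
      show "open ((\<lambda>x. (x, y)) -` U)"
        using \<open>open U\<close> by (intro continuous_open_vimage continuous_intros)
    qed (use xy partials(2) in auto)
  qed (use g1(2) g2(2) in auto)
qed

lemma double_difference_mean_value:
  fixes F F_x F_xy :: "real \<Rightarrow> real \<Rightarrow> real"
  assumes "h > 0" and "k > 0"
    and F_x: "\<And>x y. x \<in> {a..a+h} \<Longrightarrow> y \<in> {b..b+k} \<Longrightarrow>
      ((\<lambda>x. F x y) has_real_derivative F_x x y) (at x)"
    and F_xy: "\<And>x y. x \<in> {a..a+h} \<Longrightarrow> y \<in> {b..b+k} \<Longrightarrow>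
      ((\<lambda>y. F_x x y) has_real_derivative F_xy x y) (at y)"
  obtains \<xi> \<eta> where "\<xi> \<in> {a<..<a+h}" "\<eta> \<in> {b<..<b+k}"
    "F (a+h) (b+k) - F (a+h) b - F a (b+k) + F a b = h * k * F_xy \<xi> \<eta>"
proof -
  have "((\<lambda>x. F x (b+k) - F x b) has_real_derivative F_x x (b+k) - F_x x b) (at x)"
    if "a \<le> x" "x \<le> a+h" for x
    using that \<open>k > 0\<close> by (intro DERIV_diff F_x) auto
  then obtain \<xi> where \<xi>: "a < \<xi>" "\<xi> < a+h"
    "(F (a+h) (b+k) - F (a+h) b) - (F a (b+k) - F a b) = (a+h - a) * (F_x \<xi> (b+k) - F_x \<xi> b)"
    using MVT2[of a "a+h"] \<open>h > 0\<close> by force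
  have "(F_x \<xi> has_real_derivative F_xy \<xi> y) (at y)" if "b \<le> y" "y \<le> b+k" for y
    using that \<xi> F_xy[of \<xi> y] by simp
  then obtain \<eta> where "b < \<eta>" "\<eta> < b+k" "F_x \<xi> (b+k) - F_x \<xi> b = (b+k - b) * F_xy \<xi> \<eta>"
    using MVT2[of b "b+k"] \<open>k > 0\<close> by force
  with \<xi> show ?thesis
    by (intro that[of \<xi> \<eta>]) (auto simp: algebra_simps)
qed

lemma mixed_partials_eq_real:
  fixes F F_s F_t F_st F_ts :: "real \<times> real \<Rightarrow> real"
  assumes "open U" and "(s0, t0) \<in> U"
    and F_s: "\<And>x y. (x, y) \<in> U \<Longrightarrow> ((\<lambda>x. F (x, y)) has_real_derivative F_s (x, y)) (at x)"
    and F_t: "\<And>x y. (x, y) \<in> U \<Longrightarrow> ((\<lambda>y. F (x, y)) has_real_derivative F_t (x, y)) (at y)"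
    and F_st: "\<And>x y. (x, y) \<in> U \<Longrightarrow> ((\<lambda>y. F_s (x, y)) has_real_derivative F_st (x, y)) (at y)"
    and F_ts: "\<And>x y. (x, y) \<in> U \<Longrightarrow> ((\<lambda>x. F_t (x, y)) has_real_derivative F_ts (x, y)) (at x)"
    and "continuous_on U F_st" and "continuous_on U F_ts"
  shows "F_st (s0, t0) = F_ts (s0, t0)"
proof -
  have "\<bar>F_st (s0, t0) - F_ts (s0, t0)\<bar> < 2 * e" if "e > 0" for e
  proof -
    obtain r where "r > 0" and r: "ball (s0, t0) r \<subseteq> U"
      using assms(1,2) open_contains_ball by blast
    have "isCont F_st (s0, t0)" and "isCont F_ts (s0, t0)"
      using assms continuous_on_eq_continuous_at by blast+
    then obtain d1 d2 where "d1 > 0" "d2 > 0"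
      and d1: "\<And>p. dist p (s0, t0) < d1 \<Longrightarrow> dist (F_st p) (F_st (s0, t0)) < e"
      and d2: "\<And>p. dist p (s0, t0) < d2 \<Longrightarrow> dist (F_ts p) (F_ts (s0, t0)) < e"
      using \<open>e > 0\<close> unfolding continuous_at_eps_delta by metis
    define h where "h = min r (min d1 d2) / 3"
    have "h > 0"
      using \<open>r > 0\<close> \<open>d1 > 0\<close> \<open>d2 > 0\<close> by (simp add: h_def)
    have close: "dist (x, y) (s0, t0) < min r (min d1 d2)"
      if "x \<in> {s0..s0+h}" "y \<in> {t0..t0+h}" for x y
    proof -
      have "dist (x, y) (s0, t0) \<le> \<bar>x - s0\<bar> + \<bar>y - t0\<bar>"
        using sqrt_sum_squares_le_sum_abs by (simp add: dist_Pair_Pair dist_real_def)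
      also have "\<dots> < min r (min d1 d2)"
        using that \<open>h > 0\<close> unfolding h_def by auto
      finally show ?thesis .
    qed
    then have box: "(x, y) \<in> U" if "x \<in> {s0..s0+h}" "y \<in> {t0..t0+h}" for x y
      using that r by (force simp: dist_commute)
    \<comment> \<open>the same second difference of \<open>F\<close> over the square, expanded in either order\<close>
    obtain \<xi> \<eta> where \<xi>\<eta>: "\<xi> \<in> {s0<..<s0+h}" "\<eta> \<in> {t0<..<t0+h}" and D_st:
      "F (s0+h, t0+h) - F (s0+h, t0) - F (s0, t0+h) + F (s0, t0) = h * h * F_st (\<xi>, \<eta>)"
      using double_difference_mean_value[of h h s0 t0 "\<lambda>x y. F (x, y)" "\<lambda>x y. F_s (x, y)"
          "\<lambda>x y. F_st (x, y)"] \<open>h > 0\<close> box F_s F_st by blast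
    obtain \<eta>' \<xi>' where \<xi>\<eta>': "\<eta>' \<in> {t0<..<t0+h}" "\<xi>' \<in> {s0<..<s0+h}" and D_ts:
      "F (s0+h, t0+h) - F (s0, t0+h) - F (s0+h, t0) + F (s0, t0) = h * h * F_ts (\<xi>', \<eta>')"
      using double_difference_mean_value[of h h t0 s0 "\<lambda>y x. F (x, y)" "\<lambda>y x. F_t (x, y)"
          "\<lambda>y x. F_ts (x, y)"] \<open>h > 0\<close> box F_t F_ts by blast
    have "h * h * F_st (\<xi>, \<eta>) = h * h * F_ts (\<xi>', \<eta>')"
      using D_st D_ts by linarith
    then have "F_st (\<xi>, \<eta>) = F_ts (\<xi>', \<eta>')"
      using \<open>h > 0\<close> by simp
    moreover have "dist (F_st (\<xi>, \<eta>)) (F_st (s0, t0)) < e"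
      using close[of \<xi> \<eta>] \<xi>\<eta> by (intro d1) auto
    moreover have "dist (F_ts (\<xi>', \<eta>')) (F_ts (s0, t0)) < e"
      using close[of \<xi>' \<eta>'] \<xi>\<eta>' by (intro d2) auto
    ultimately show ?thesis
      unfolding dist_real_def by arith
  qed
  from this[of "\<bar>F_st (s0, t0) - F_ts (s0, t0)\<bar> / 2"] show ?thesis
    by fastforce
qed

lemma has_vector_derivative_inner_const:
  fixes X :: "real \<Rightarrow> 'b::real_inner"
  assumes "(X has_vector_derivative X') (at x)"
  shows "((\<lambda>x. X x \<bullet> v) has_real_derivative X' \<bullet> v) (at x)"
  using bounded_linear.has_vector_derivative[OF bounded_linear_inner_left assms, of v]
  by (simp add: has_real_derivative_iff_has_vector_derivative)

lemma mixed_partials_commute: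
  fixes f :: "real \<Rightarrow> real \<Rightarrow> 'b::real_inner"
  assumes C2: "Ck_on 2 U (\<lambda>p. f (fst p) (snd p))" and "open U" and "(s, t) \<in> U"
  obtains A where "((\<lambda>y. d_s f s y) has_vector_derivative A) (at t)"
    and "((\<lambda>x. d_t f x t) has_vector_derivative A) (at s)"
proof -
  obtain F_st F_ts where F_st: "\<And>x y. (x, y) \<in> U \<Longrightarrow>
      ((\<lambda>y. d_s f x y) has_vector_derivative F_st (x, y)) (at y)"
    and F_ts: "\<And>x y. (x, y) \<in> U \<Longrightarrow> ((\<lambda>x. d_t f x y) has_vector_derivative F_ts (x, y)) (at x)"
    and "continuous_on U F_st" "continuous_on U F_ts"
    using Ck_on_2_second_partials[OF C2 \<open>open U\<close>] by blast
  have C1: "Ck_on (Suc 1) U (\<lambda>p. f (fst p) (snd p))"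
    using C2 by (simp add: numeral_2_eq_2)
  have "F_st (s, t) \<bullet> v = F_ts (s, t) \<bullet> v" for v
    using Ck_on_Suc_partials[OF C1] F_st F_ts \<open>continuous_on U F_st\<close> \<open>continuous_on U F_ts\<close>
    by (intro mixed_partials_eq_real[OF \<open>open U\<close> \<open>(s, t) \<in> U\<close>,
          where F = "\<lambda>p. f (fst p) (snd p) \<bullet> v" and F_s = "\<lambda>p. d_s f (fst p) (snd p) \<bullet> v"
            and F_t = "\<lambda>p. d_t f (fst p) (snd p) \<bullet> v"])
      (auto intro!: has_vector_derivative_inner_const continuous_intros)
  then have "F_st (s, t) = F_ts (s, t)"
    using vector_eq_rdot by blast
  then show ?thesis
    using that F_st F_ts \<open>(s, t) \<in> U\<close> by metis
qed

section \<open>Derivatives of Lorentz products and frames\<close>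

lemma has_vector_derivative_unique_islimpt:
  fixes f g :: "real \<Rightarrow> 'b::real_normed_vector"
  assumes "(f has_vector_derivative f') (at x)" and "(g has_vector_derivative g') (at x)"
    and "x \<in> S" and "x islimpt S" and "\<And>y. y \<in> S \<Longrightarrow> f y = g y"
  shows "f' = g'"
proof -
  have "(g has_vector_derivative f') (at x within S)"
    using has_vector_derivative_at_within[OF assms(1)]
    by (rule has_vector_derivative_transform_within[OF _ zero_less_one \<open>x \<in> S\<close>]) (use assms(5) in auto)
  moreover have "(g has_vector_derivative g') (at x within S)"
    using assms(2) by (rule has_vector_derivative_at_within)
  moreover have "at x within S \<noteq> bot"
    using \<open>x islimpt S\<close> trivial_limit_within by blast
  ultimately show ?thesis
    using vector_derivative_unique_within by blast
qed

lemma lor_has_vector_derivative: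
  assumes X: "(X has_vector_derivative X') (at t)" and Y: "(Y has_vector_derivative Y') (at t)"
  shows "((\<lambda>y. lor (X y) (Y y)) has_vector_derivative lor X' (Y t) + lor (X t) Y') (at t)"
proof -
  have component: "((\<lambda>y. Z y $ i) has_vector_derivative Z' $ i) (at t)"
    if "(Z has_vector_derivative Z') (at t)" for Z :: "real \<Rightarrow> real^4" and Z' i
    using bounded_linear.has_vector_derivative[OF bounded_linear_vec_nth that] by simp
  have "((\<lambda>y. - (X y $1 * Y y $1) + X y $2 * Y y $2 + X y $3 * Y y $3 + X y $4 * Y y $4)
     has_vector_derivative - (X t $1 * Y' $1 + X' $1 * Y t $1) + (X t $2 * Y' $2 + X' $2 * Y t $2)
       + (X t $3 * Y' $3 + X' $3 * Y t $3) + (X t $4 * Y' $4 + X' $4 * Y t $4)) (at t)"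
    by (intro has_vector_derivative_add has_vector_derivative_minus has_vector_derivative_mult
        component X Y)
  then show ?thesis
    unfolding lor_def by (simp add: algebra_simps)
qed

lemma lor_derivative_eq_0_if_constant:
  assumes "(X has_vector_derivative X') (at t)" and "(Y has_vector_derivative Y') (at t)"
    and "t \<in> S" and "t islimpt S" and "\<And>y. y \<in> S \<Longrightarrow> lor (X y) (Y y) = lor (X t) (Y t)"
  shows "lor X' (Y t) + lor (X t) Y' = 0"
  using has_vector_derivative_unique_islimpt[OF lor_has_vector_derivative[OF assms(1,2)]
      has_vector_derivative_const assms(3,4)] assms(5) by blast

text \<open>The limit-point hypothesis allows \<open>t\<close> to be an endpoint of the parameter interval.\<close>

lemma null_frame_variation_if_constant:
  assumes T: "(T has_vector_derivative T') (at t)" and N: "(N has_vector_derivative N') (at t)"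
    and B1: "(B1 has_vector_derivative B1') (at t)" and B2: "(B2 has_vector_derivative B2') (at t)"
    and "t \<in> S" and "t islimpt S" and frame: "\<And>y. y \<in> S \<Longrightarrow> null_frame (T y) (N y) (B1 y) (B2 y)"
  shows "null_frame_variation (T t) (N t) (B1 t) (B2 t) T' N' B1' B2'"
proof -
  have products_constant: "lor (X y) (Y y) = lor (X t) (Y t)"
    if "y \<in> S" and "X \<in> {T, N, B1, B2}" and "Y \<in> {T, N, B1, B2}" for X Y y
    using that frame[OF \<open>y \<in> S\<close>] frame[OF \<open>t \<in> S\<close>] by (auto simp: null_frame_def lor_commute)
  have stationary: "lor X' (Y t) + lor (X t) Y' = 0"
    if "(X has_vector_derivative X') (at t)" "(Y has_vector_derivative Y') (at t)"
      and "X \<in> {T, N, B1, B2}" and "Y \<in> {T, N, B1, B2}" for X Y X' Y'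
    using lor_derivative_eq_0_if_constant[OF that(1,2) \<open>t \<in> S\<close> \<open>t islimpt S\<close>]
      products_constant that(3,4) by blast
  show ?thesis
    unfolding null_frame_variation_def
    using stationary[OF T T] stationary[OF N N] stationary[OF B1 B1] stationary[OF B2 B2]
      stationary[OF B1 B2] stationary[OF T N] stationary[OF T B1] stationary[OF T B2]
      stationary[OF N B1] stationary[OF N B2]
    by simp
qed

lemma frenet_combination_has_vector_derivative:
  fixes T N B1 B2 :: "real \<Rightarrow> 'a::real_normed_vector"
  assumes "(T has_vector_derivative k1 *\<^sub>R N s) (at s)"
    and "(N has_vector_derivative - k1 *\<^sub>R T s + k2 *\<^sub>R B1 s) (at s)"
    and "(B1 has_vector_derivative 0) (at s)"
    and "(B2 has_vector_derivative - k2 *\<^sub>R N s) (at s)"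
    and "(\<beta>1 has_real_derivative \<beta>1') (at s)" "(\<beta>2 has_real_derivative \<beta>2') (at s)"
    "(\<beta>3 has_real_derivative \<beta>3') (at s)" "(\<beta>4 has_real_derivative \<beta>4') (at s)"
  shows "((\<lambda>x. \<beta>1 x *\<^sub>R T x + \<beta>2 x *\<^sub>R N x + \<beta>3 x *\<^sub>R B1 x + \<beta>4 x *\<^sub>R B2 x) has_vector_derivative
      (\<beta>1' - \<beta>2 s * k1) *\<^sub>R T s + (\<beta>2' + \<beta>1 s * k1 - \<beta>4 s * k2) *\<^sub>R N s
      + (\<beta>3' + \<beta>2 s * k2) *\<^sub>R B1 s + \<beta>4' *\<^sub>R B2 s) (at s)"
proof -
  have "((\<lambda>x. \<beta>1 x *\<^sub>R T x + \<beta>2 x *\<^sub>R N x + \<beta>3 x *\<^sub>R B1 x + \<beta>4 x *\<^sub>R B2 x) has_vector_derivative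
      (\<beta>1 s *\<^sub>R (k1 *\<^sub>R N s) + \<beta>1' *\<^sub>R T s) + (\<beta>2 s *\<^sub>R (- k1 *\<^sub>R T s + k2 *\<^sub>R B1 s) + \<beta>2' *\<^sub>R N s)
      + (\<beta>3 s *\<^sub>R 0 + \<beta>3' *\<^sub>R B1 s) + (\<beta>4 s *\<^sub>R (- k2 *\<^sub>R N s) + \<beta>4' *\<^sub>R B2 s)) (at s)"
    by (intro has_vector_derivative_add has_vector_derivative_scaleR assms)
  then show ?thesis
    by (rule has_vector_derivative_eq_rhs) (simp add: algebra_simps)
qed

lemma tangent_variation_commute:
  fixes \<gamma> T :: "real \<Rightarrow> real \<Rightarrow> 'b::real_inner"
  assumes "Ck_on 2 U (\<lambda>p. \<gamma> (fst p) (snd p))" and "open U" and "(s, t) \<in> U"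
    and T: "((\<lambda>y. T s y) has_vector_derivative d_t T s t) (at t)"
    and "t \<in> S" "t islimpt S" "\<And>y. y \<in> S \<Longrightarrow> T s y = d_s \<gamma> s y"
    and V: "(V has_vector_derivative V') (at s)"
    and "s \<in> S'" "s islimpt S'" "\<And>x. x \<in> S' \<Longrightarrow> d_t \<gamma> x t = V x"
  shows "d_t T s t = V'"
proof -
  obtain A where A_s: "((\<lambda>y. d_s \<gamma> s y) has_vector_derivative A) (at t)"
    and A_t: "((\<lambda>x. d_t \<gamma> x t) has_vector_derivative A) (at s)"
    using mixed_partials_commute assms(1-3) by blast
  have "d_t T s t = A"
    using has_vector_derivative_unique_islimpt[OF T A_s] assms(5-7) by blast
  also have "A = V'"
    using has_vector_derivative_unique_islimpt[OF A_t V] assms(9-11) by blast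
  finally show ?thesis .
qed

theorem lemma3p5:
  fixes \<gamma> T N B1 B2 :: "real \<Rightarrow> real \<Rightarrow> real^4"
    and k1 k2 \<beta>1 \<beta>2 \<beta>3 \<beta>4 :: "real \<Rightarrow> real \<Rightarrow> real"
    and l w :: real and U :: "(real \<times> real) set"
  defines "R \<equiv> {0..l} \<times> {0..<w}"
  assumes "l > 0" and "w > 0"
    and "open U" and "R \<subseteq> U"
    and smooth:
      "smooth_on U (\<lambda>p. \<gamma> (fst p) (snd p))"
      "smooth_on U (\<lambda>p. T (fst p) (snd p))"
      "smooth_on U (\<lambda>p. N (fst p) (snd p))"
      "smooth_on U (\<lambda>p. B1 (fst p) (snd p))"
      "smooth_on U (\<lambda>p. B2 (fst p) (snd p))"
      "smooth_on U (\<lambda>p. k1 (fst p) (snd p))"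
      "smooth_on U (\<lambda>p. k2 (fst p) (snd p))"
      "smooth_on U (\<lambda>p. \<beta>1 (fst p) (snd p))"
      "smooth_on U (\<lambda>p. \<beta>2 (fst p) (snd p))"
      "smooth_on U (\<lambda>p. \<beta>3 (fst p) (snd p))"
      "smooth_on U (\<lambda>p. \<beta>4 (fst p) (snd p))"
    and arclength: "\<And>s t. (s, t) \<in> R \<Longrightarrow> lnorm (d_s \<gamma> s t) = 1"
    and tangent: "\<And>s t. (s, t) \<in> R \<Longrightarrow> T s t = d_s \<gamma> s t"
    and frame: "\<And>s t. (s, t) \<in> R \<Longrightarrow>
        lor (T s t) (T s t) = 1 \<and> lor (N s t) (N s t) = 1 \<and>
        lor (B1 s t) (B1 s t) = 0 \<and> lor (B2 s t) (B2 s t) = 0 \<and>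
        lor (B1 s t) (B2 s t) = 1 \<and>
        lor (T s t) (N s t) = 0 \<and> lor (T s t) (B1 s t) = 0 \<and> lor (T s t) (B2 s t) = 0 \<and>
        lor (N s t) (B1 s t) = 0 \<and> lor (N s t) (B2 s t) = 0"
    and frenet: "\<And>s t. (s, t) \<in> R \<Longrightarrow>
        d_s T s t = k1 s t *\<^sub>R N s t \<and>
        d_s N s t = - k1 s t *\<^sub>R T s t + k2 s t *\<^sub>R B1 s t \<and>
        d_s B1 s t = 0 \<and>
        d_s B2 s t = - k2 s t *\<^sub>R N s t"
    and variation: "\<And>s t. (s, t) \<in> R \<Longrightarrow>
        d_t \<gamma> s t = \<beta>1 s t *\<^sub>R T s t + \<beta>2 s t *\<^sub>R N s t + \<beta>3 s t *\<^sub>R B1 s t + \<beta>4 s t *\<^sub>R B2 s t"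
    and inextensible: "\<And>s t. (s, t) \<in> R \<Longrightarrow> d_t (\<lambda>s' t'. lnorm (d_s \<gamma> s' t')) s t = 0"
  shows "\<forall>(s, t) \<in> R.
     (let \<psi>1 = lor (d_t N s t) (B1 s t);
          \<psi>2 = lor (d_t N s t) (B2 s t);
          \<psi>3 = lor (d_t B1 s t) (B2 s t)
      in d_t T s t = (d_s \<beta>2 s t + \<beta>1 s t * k1 s t - \<beta>4 s t * k2 s t) *\<^sub>R N s t
                     + (d_s \<beta>3 s t + \<beta>2 s t * k2 s t) *\<^sub>R B1 s t
                     + d_s \<beta>4 s t *\<^sub>R B2 s t
       \<and> d_t N s t = - (d_s \<beta>2 s t + \<beta>1 s t * k1 s t - \<beta>4 s t * k2 s t) *\<^sub>R T s t
                     + \<psi>2 *\<^sub>R B1 s t + \<psi>1 *\<^sub>R B2 s t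
       \<and> d_t B1 s t = - d_s \<beta>4 s t *\<^sub>R T s t - \<psi>1 *\<^sub>R N s t + \<psi>3 *\<^sub>R B1 s t
       \<and> d_t B2 s t = - (d_s \<beta>3 s t + k2 s t * \<beta>2 s t) *\<^sub>R T s t
                     - \<psi>2 *\<^sub>R N s t - \<psi>3 *\<^sub>R B2 s t)"
proof -
  have slices: "s \<in> {0..l}" "s islimpt {0..l}" "\<And>x. x \<in> {0..l} \<Longrightarrow> (x, t) \<in> R"
    "t \<in> {0..<w}" "t islimpt {0..<w}" "\<And>y. y \<in> {0..<w} \<Longrightarrow> (s, y) \<in> R"
    if "(s, t) \<in> R" for s t
    using that \<open>l > 0\<close> \<open>w > 0\<close> unfolding R_def by auto
  have in_U: "(s, t) \<in> U" if "(s, t) \<in> R" for s t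
    using that \<open>R \<subseteq> U\<close> by blast
  note d_s = smooth_on_partials(1)[OF _ in_U] and d_t = smooth_on_partials(2)[OF _ in_U]
  have frame_R: "null_frame (T s t) (N s t) (B1 s t) (B2 s t)" if "(s, t) \<in> R" for s t
    using frame[OF that] unfolding null_frame_def .
  have variation_R: "null_frame_variation (T s t) (N s t) (B1 s t) (B2 s t)
      (d_t T s t) (d_t N s t) (d_t B1 s t) (d_t B2 s t)" if st: "(s, t) \<in> R" for s t
    using frame_R slices(6)[OF st]
    by (intro null_frame_variation_if_constant[OF d_t[OF smooth(2) st] d_t[OF smooth(3) st]
          d_t[OF smooth(4) st] d_t[OF smooth(5) st] slices(4,5)[OF st]]) auto
  have frenet_s: "((\<lambda>x. T x t) has_vector_derivative k1 s t *\<^sub>R N s t) (at s)"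
    "((\<lambda>x. N x t) has_vector_derivative - k1 s t *\<^sub>R T s t + k2 s t *\<^sub>R B1 s t) (at s)"
    "((\<lambda>x. B1 x t) has_vector_derivative 0) (at s)"
    "((\<lambda>x. B2 x t) has_vector_derivative - k2 s t *\<^sub>R N s t) (at s)"
    if st: "(s, t) \<in> R" for s t
    using d_s[OF smooth(2) st] d_s[OF smooth(3) st] d_s[OF smooth(4) st] d_s[OF smooth(5) st]
      frenet[OF st]
    by simp_all
  have coefficient_s: "((\<lambda>x. \<beta> x t) has_real_derivative d_s \<beta> s t) (at s)"
    if "smooth_on U (\<lambda>p. \<beta> (fst p) (snd p))" and "(s, t) \<in> R"
    for \<beta> :: "real \<Rightarrow> real \<Rightarrow> real" and s t
    using d_s[OF that] by (simp add: has_real_derivative_iff_has_vector_derivative)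
  have T_t: "d_t T s t = (d_s \<beta>1 s t - \<beta>2 s t * k1 s t) *\<^sub>R T s t
      + (d_s \<beta>2 s t + \<beta>1 s t * k1 s t - \<beta>4 s t * k2 s t) *\<^sub>R N s t
      + (d_s \<beta>3 s t + \<beta>2 s t * k2 s t) *\<^sub>R B1 s t + d_s \<beta>4 s t *\<^sub>R B2 s t"
    if st: "(s, t) \<in> R" for s t
    using smooth(1) tangent variation slices(3,6)[OF st]
    by (intro tangent_variation_commute[OF _ \<open>open U\<close> in_U[OF st] d_t[OF smooth(2) st]
          slices(4,5)[OF st] _ frenet_combination_has_vector_derivative[OF frenet_s[OF st]
          coefficient_s[OF smooth(8) st] coefficient_s[OF smooth(9) st]
          coefficient_s[OF smooth(10) st] coefficient_s[OF smooth(11) st]] slices(1,2)[OF st]])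
      (auto simp: smooth_on_def)
  show ?thesis
    using null_frame_variation_expansion[OF frame_R variation_R T_t] T_t
    by (auto simp: Let_def algebra_simps)
qed

end
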